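(* Let $\mathcal{A}$ be a finite-dimensional $\mathbb{C}^*$-weak Hopf algebra, let $\rho:\mathcal{A}\to M_{d_\rho}(\mathbb{C})$ be a $*$-representation, and let $(v_{ij})_{1\le i,j\le d_v}$ be a corepresentation of $\mathcal{A}$ with $S(v_{ij})=v_{ji}^*$ for all $i,j$. Define operators $W:\mathbb{C}^{d_\rho}\otimes\mathbb{C}^{d_v}\to\mathbb{C}^{d_v}\otimes\mathbb{C}^{d_\rho}$, $P$ on $\mathbb{C}^{d_v}\otimes\mathbb{C}^{d_\rho}$ and $Q$ on $\mathbb{C}^{d_\rho}\otimes\mathbb{C}^{d_v}$ by $$\langle i,a|W|b,j\rangle=\rho_{ab}(v_{ij}),\qquad \langle i,a|P|j,b\rangle=\sum\epsilon(1_{(1)}v_{ij})\,\rho_{ab}(1_{(2)}),\qquad \langle a,i|Q|b,j\rangle=\sum\rho_{ab}(1_{(1)})\,\epsilon(v_{ij}1_{(2)}),$$ where $\Delta(1)=\sum1_{(1)}\otimes1_{(2)}$. Then $P$ and $Q$ are orthogonal projections ($P^2=P=P^\dagger$, $Q^2=Q=Q^\dagger$), $WW^\dagger=P$ and $W^\dagger W=Q$, and there exists a unitary $U:\mathbb{C}^{d_\rho}\otimes\mathbb{C}^{d_v}\to\mathbb{C}^{d_v}\otimes\mathbb{C}^{d_\rho}$ with $W=PU=UQ$.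
   Context: A weak bialgebra is a finite-dimensional unital associative algebra and coassociative counital coalgebra with $\Delta(xy)=\Delta(x)\Delta(y)$ and, in Sweedler notation, $\Delta^{(2)}(1)=(1\otimes\Delta(1))(\Delta(1)\otimes1)=(\Delta(1)\otimes1)(1\otimes\Delta(1))$ and $\epsilon(xyz)=\sum\epsilon(xy_{(1)})\epsilon(y_{(2)}z)=\sum\epsilon(xy_{(2)})\epsilon(y_{(1)}z)$ for all $x,y,z$. Set $\epsilon_s(x)=\sum1_{(1)}\epsilon(x1_{(2)})$ and $\epsilon_t(x)=\sum\epsilon(1_{(1)}x)1_{(2)}$. A weak Hopf algebra is a weak bialgebra with a linear map $S$ such that $\sum S(x_{(1)})x_{(2)}=\epsilon_s(x)$, $\sum x_{(1)}S(x_{(2)})=\epsilon_t(x)$, $\sum S(x_{(1)})x_{(2)}S(x_{(3)})=S(x)$. It is a $*$-weak Hopf algebra if there is an antilinear involution $*$ with $(xy)^*=y^*x^*$ and $\Delta(x^* )=\Delta(x)^*$, and a $\mathbb{C}^*$-weak Hopf algebra if additionally it has a faithful $*$-representation. A $*$-representation is a unital homomorphism with $\rho(x^* )=\rho(x)^\dagger$. A corepresentation is a matrix $(v_{ij})$ of elements of $\mathcal{A}$ with $\Delta(v_{ij})=\sum_kv_{ik}\otimes v_{kj}$ and $\epsilon(v_{ij})=\delta_{ij}$. *)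

theory Defs
  imports Complex_Main
begin

text \<open>
A finite-dimensional algebra/coalgebra over the complex numbers is represented concretely
by a chosen basis indexed by a finite type 'b.  Elements are coordinate vectors
'b \<Rightarrow> complex, elements of A\<otimes>A are coordinate vectors on 'b \<times> 'b, elements
of A\<otimes>A\<otimes>A coordinate vectors on 'b \<times> 'b \<times> 'b.  All structure maps are given by their
structure constants with respect to the basis (so they are automatically (anti)linear).
\<close>

record 'b wha =
  wh_mc :: "'b \<Rightarrow> 'b \<Rightarrow> 'b \<Rightarrow> complex"  \<comment> \<open>e_i e_j = sum_k mc i j k e_k\<close>
  wh_un :: "'b \<Rightarrow> complex"                 \<comment> \<open>coordinates of the unit 1\<close>
  wh_dc :: "'b \<Rightarrow> 'b \<Rightarrow> 'b \<Rightarrow> complex"  \<comment> \<open>Delta(e_k) = sum_(i,j) dc k i j e_i (x) e_j\<close>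
  wh_ep :: "'b \<Rightarrow> complex"                 \<comment> \<open>epsilon(e_k)\<close>
  wh_an :: "'b \<Rightarrow> 'b \<Rightarrow> complex"         \<comment> \<open>S(e_k) = sum_j an k j e_j\<close>
  wh_st :: "'b \<Rightarrow> 'b \<Rightarrow> complex"         \<comment> \<open>(e_k)^* = sum_j st k j e_j\<close>

definition bvec :: "'b \<Rightarrow> 'b \<Rightarrow> complex" where
  "bvec k = (\<lambda>i. if i = k then 1 else 0)"

definition amul :: "('b::finite) wha \<Rightarrow> ('b \<Rightarrow> complex) \<Rightarrow> ('b \<Rightarrow> complex) \<Rightarrow> ('b \<Rightarrow> complex)" where
  "amul H x y = (\<lambda>k. \<Sum>i\<in>UNIV. \<Sum>j\<in>UNIV. x i * y j * wh_mc H i j k)"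

definition cop :: "('b::finite) wha \<Rightarrow> ('b \<Rightarrow> complex) \<Rightarrow> ('b \<times> 'b \<Rightarrow> complex)" where
  "cop H x = (\<lambda>(i, j). \<Sum>k\<in>UNIV. x k * wh_dc H k i j)"

definition cou :: "('b::finite) wha \<Rightarrow> ('b \<Rightarrow> complex) \<Rightarrow> complex" where
  "cou H x = (\<Sum>k\<in>UNIV. x k * wh_ep H k)"

definition ant :: "('b::finite) wha \<Rightarrow> ('b \<Rightarrow> complex) \<Rightarrow> ('b \<Rightarrow> complex)" where
  "ant H x = (\<lambda>j. \<Sum>k\<in>UNIV. x k * wh_an H k j)"

definition astar :: "('b::finite) wha \<Rightarrow> ('b \<Rightarrow> complex) \<Rightarrow> ('b \<Rightarrow> complex)" where
  "astar H x = (\<lambda>j. \<Sum>k\<in>UNIV. cnj (x k) * wh_st H k j)"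

text \<open>(Delta \<otimes> id) Delta and (id \<otimes> Delta) Delta\<close>
definition cop3L :: "('b::finite) wha \<Rightarrow> ('b \<Rightarrow> complex) \<Rightarrow> ('b \<times> 'b \<times> 'b \<Rightarrow> complex)" where
  "cop3L H x = (\<lambda>(i, j, l). \<Sum>a\<in>UNIV. cop H x (a, l) * wh_dc H a i j)"

definition cop3R :: "('b::finite) wha \<Rightarrow> ('b \<Rightarrow> complex) \<Rightarrow> ('b \<times> 'b \<times> 'b \<Rightarrow> complex)" where
  "cop3R H x = (\<lambda>(i, j, l). \<Sum>a\<in>UNIV. cop H x (i, a) * wh_dc H a j l)"

definition tmul2 :: "('b::finite) wha \<Rightarrow> ('b \<times> 'b \<Rightarrow> complex) \<Rightarrow> ('b \<times> 'b \<Rightarrow> complex) \<Rightarrow> ('b \<times> 'b \<Rightarrow> complex)" where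
  "tmul2 H X Y = (\<lambda>(k, l). \<Sum>i\<in>UNIV. \<Sum>j\<in>UNIV. \<Sum>i'\<in>UNIV. \<Sum>j'\<in>UNIV.
      X (i, j) * Y (i', j') * wh_mc H i i' k * wh_mc H j j' l)"

definition tmul3 :: "('b::finite) wha \<Rightarrow> ('b \<times> 'b \<times> 'b \<Rightarrow> complex) \<Rightarrow> ('b \<times> 'b \<times> 'b \<Rightarrow> complex)
    \<Rightarrow> ('b \<times> 'b \<times> 'b \<Rightarrow> complex)" where
  "tmul3 H X Y = (\<lambda>(k, l, m). \<Sum>i\<in>UNIV. \<Sum>j\<in>UNIV. \<Sum>p\<in>UNIV. \<Sum>i'\<in>UNIV. \<Sum>j'\<in>UNIV. \<Sum>p'\<in>UNIV.
      X (i, j, p) * Y (i', j', p') * wh_mc H i i' k * wh_mc H j j' l * wh_mc H p p' m)"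

definition tstar2 :: "('b::finite) wha \<Rightarrow> ('b \<times> 'b \<Rightarrow> complex) \<Rightarrow> ('b \<times> 'b \<Rightarrow> complex)" where
  "tstar2 H X = (\<lambda>(k, l). \<Sum>i\<in>UNIV. \<Sum>j\<in>UNIV. cnj (X (i, j)) * wh_st H i k * wh_st H j l)"

text \<open>Sweedler-type sums: apply a bilinear (trilinear) map given on basis vectors to a tensor.\<close>
definition tapp2 :: "('b::finite \<times> 'b \<Rightarrow> complex) \<Rightarrow> (('b \<Rightarrow> complex) \<Rightarrow> ('b \<Rightarrow> complex) \<Rightarrow> ('b \<Rightarrow> complex))
    \<Rightarrow> ('b \<Rightarrow> complex)" where
  "tapp2 X f = (\<lambda>k. \<Sum>i\<in>UNIV. \<Sum>j\<in>UNIV. X (i, j) * f (bvec i) (bvec j) k)"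

definition tapp3 :: "('b::finite \<times> 'b \<times> 'b \<Rightarrow> complex)
    \<Rightarrow> (('b \<Rightarrow> complex) \<Rightarrow> ('b \<Rightarrow> complex) \<Rightarrow> ('b \<Rightarrow> complex) \<Rightarrow> ('b \<Rightarrow> complex)) \<Rightarrow> ('b \<Rightarrow> complex)" where
  "tapp3 X f = (\<lambda>k. \<Sum>i\<in>UNIV. \<Sum>j\<in>UNIV. \<Sum>p\<in>UNIV. X (i, j, p) * f (bvec i) (bvec j) (bvec p) k)"

text \<open>epsilon_s(x) = sum 1_(1) epsilon(x 1_(2)),  epsilon_t(x) = sum epsilon(1_(1) x) 1_(2).\<close>
definition eps_s :: "('b::finite) wha \<Rightarrow> ('b \<Rightarrow> complex) \<Rightarrow> ('b \<Rightarrow> complex)" where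
  "eps_s H x = tapp2 (cop H (wh_un H)) (\<lambda>a b. (\<lambda>k. cou H (amul H x b) * a k))"

definition eps_t :: "('b::finite) wha \<Rightarrow> ('b \<Rightarrow> complex) \<Rightarrow> ('b \<Rightarrow> complex)" where
  "eps_t H x = tapp2 (cop H (wh_un H)) (\<lambda>a b. (\<lambda>k. cou H (amul H a x) * b k))"

definition weak_bialgebra :: "('b::finite) wha \<Rightarrow> bool" where
  "weak_bialgebra H \<longleftrightarrow>
     (\<forall>x y z. amul H (amul H x y) z = amul H x (amul H y z)) \<and>
     (\<forall>x. amul H (wh_un H) x = x \<and> amul H x (wh_un H) = x) \<and>
     (\<forall>x. cop3L H x = cop3R H x) \<and>
     (\<forall>x. (\<lambda>j. \<Sum>i\<in>UNIV. cop H x (i, j) * wh_ep H i) = x \<and>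
          (\<lambda>i. \<Sum>j\<in>UNIV. cop H x (i, j) * wh_ep H j) = x) \<and>
     (\<forall>x y. cop H (amul H x y) = tmul2 H (cop H x) (cop H y)) \<and>
     (cop3L H (wh_un H) =
        tmul3 H (\<lambda>(i, j, l). wh_un H i * cop H (wh_un H) (j, l))
                (\<lambda>(i, j, l). cop H (wh_un H) (i, j) * wh_un H l)) \<and>
     (cop3L H (wh_un H) =
        tmul3 H (\<lambda>(i, j, l). cop H (wh_un H) (i, j) * wh_un H l)
                (\<lambda>(i, j, l). wh_un H i * cop H (wh_un H) (j, l))) \<and>
     (\<forall>x y z. cou H (amul H (amul H x y) z) =
        (\<Sum>i\<in>UNIV. \<Sum>j\<in>UNIV. cop H y (i, j) * cou H (amul H x (bvec i)) * cou H (amul H (bvec j) z))) \<and>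
     (\<forall>x y z. cou H (amul H (amul H x y) z) =
        (\<Sum>i\<in>UNIV. \<Sum>j\<in>UNIV. cop H y (i, j) * cou H (amul H x (bvec j)) * cou H (amul H (bvec i) z)))"

definition weak_hopf :: "('b::finite) wha \<Rightarrow> bool" where
  "weak_hopf H \<longleftrightarrow> weak_bialgebra H \<and>
     (\<forall>x. tapp2 (cop H x) (\<lambda>a b. amul H (ant H a) b) = eps_s H x) \<and>
     (\<forall>x. tapp2 (cop H x) (\<lambda>a b. amul H a (ant H b)) = eps_t H x) \<and>
     (\<forall>x. tapp3 (cop3L H x) (\<lambda>a b c. amul H (amul H (ant H a) b) (ant H c)) = ant H x)"

definition star_weak_hopf :: "('b::finite) wha \<Rightarrow> bool" where
  "star_weak_hopf H \<longleftrightarrow> weak_hopf H \<and>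
     (\<forall>x. astar H (astar H x) = x) \<and>
     (\<forall>x y. astar H (amul H x y) = amul H (astar H y) (astar H x)) \<and>
     (\<forall>x. cop H (astar H x) = tstar2 H (cop H x))"

text \<open>Representations: R k is the matrix (indexed by the set I) representing basis vector e_k;
  the representation of x is then sum_k x_k R k.\<close>
definition rep :: "('b::finite \<Rightarrow> 'i \<Rightarrow> 'i \<Rightarrow> complex) \<Rightarrow> ('b \<Rightarrow> complex) \<Rightarrow> 'i \<Rightarrow> 'i \<Rightarrow> complex" where
  "rep R x = (\<lambda>a c. \<Sum>k\<in>UNIV. x k * R k a c)"

definition star_rep_on :: "('b::finite) wha \<Rightarrow> 'i set \<Rightarrow> ('b \<Rightarrow> 'i \<Rightarrow> 'i \<Rightarrow> complex) \<Rightarrow> bool" where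
  "star_rep_on H I R \<longleftrightarrow>
     (\<forall>a\<in>I. \<forall>c\<in>I. rep R (wh_un H) a c = (if a = c then 1 else 0)) \<and>
     (\<forall>x y. \<forall>a\<in>I. \<forall>c\<in>I. rep R (amul H x y) a c = (\<Sum>b\<in>I. rep R x a b * rep R y b c)) \<and>
     (\<forall>x. \<forall>a\<in>I. \<forall>c\<in>I. rep R (astar H x) a c = cnj (rep R x c a))"

definition C_star_weak_hopf :: "('b::finite) wha \<Rightarrow> bool" where
  "C_star_weak_hopf H \<longleftrightarrow> star_weak_hopf H \<and>
     (\<exists>(n::nat) (R :: 'b \<Rightarrow> nat \<Rightarrow> nat \<Rightarrow> complex). star_rep_on H {..<n} R \<and>
        (\<forall>x. (\<forall>a<n. \<forall>c<n. rep R x a c = 0) \<longrightarrow> x = (\<lambda>_. 0)))"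

definition corep :: "('b::finite) wha \<Rightarrow> ('v::finite \<Rightarrow> 'v \<Rightarrow> 'b \<Rightarrow> complex) \<Rightarrow> bool" where
  "corep H v \<longleftrightarrow>
     (\<forall>i j. cop H (v i j) = (\<lambda>(a, b). \<Sum>k\<in>UNIV. v i k a * v k j b)) \<and>
     (\<forall>i j. cou H (v i j) = (if i = j then 1 else 0))"

definition mmul :: "('i \<Rightarrow> 'j::finite \<Rightarrow> complex) \<Rightarrow> ('j \<Rightarrow> 'k \<Rightarrow> complex) \<Rightarrow> 'i \<Rightarrow> 'k \<Rightarrow> complex" where
  "mmul A B = (\<lambda>i k. \<Sum>j\<in>UNIV. A i j * B j k)"

definition madj :: "('i \<Rightarrow> 'j \<Rightarrow> complex) \<Rightarrow> 'j \<Rightarrow> 'i \<Rightarrow> complex" where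
  "madj A = (\<lambda>j i. cnj (A i j))"

definition mid :: "'i \<Rightarrow> 'i \<Rightarrow> complex" where
  "mid = (\<lambda>i j. if i = j then 1 else 0)"

definition unitary :: "('i::finite \<Rightarrow> 'j::finite \<Rightarrow> complex) \<Rightarrow> bool" where
  "unitary U \<longleftrightarrow> mmul U (madj U) = mid \<and> mmul (madj U) U = mid"

end

(*
  The operator W with entries rho_ab(v_ij) is a partial isometry.  Because S(v_ij) = v_ji^*,
  the entries of W W^dagger and W^dagger W are rho_ab(sum_k v_ik S(v_kj)) and
  rho_ab(sum_k S(v_ik) v_kj), which the antipode axioms turn into rho_ab(epsilon_t(v_ij)) = P and
  rho_ab(epsilon_s(v_ij)) = Q; and W Q = W because sum_k v_ik epsilon_s(v_kj) = v_ij, which is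
  x = (id (x) epsilon)(Delta(x) Delta(1)) read in Sweedler notation.  Hence P and Q are the final
  and initial projections of W.

  A partial isometry between spaces of the same dimension d_rho d_v extends to a unitary U with
  W = P U = U Q.  Since trace P = trace Q, as long as Q is not the identity neither is P, so W has
  unit vectors y in its kernel and x in the kernel of W^dagger; W + x y^dagger is again a partial
  isometry with trace Q raised by one, and any unitary extension of it is one of W.  Induction on
  the defect d_rho d_v - trace Q ends at Q = 1, where P = 1 and U = W.
*)

theory Submission
  imports Defs "HOL-Library.Function_Algebras" "HOL-Library.Cardinality"
begin

section \<open>Partial isometries of finite matrices\<close>

definition mvmul :: "('i \<Rightarrow> 'j::finite \<Rightarrow> complex) \<Rightarrow> ('j \<Rightarrow> complex) \<Rightarrow> 'i \<Rightarrow> complex" where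
  "mvmul A x = (\<lambda>i. \<Sum>j\<in>UNIV. A i j * x j)"

definition vinner :: "('i::finite \<Rightarrow> complex) \<Rightarrow> ('i \<Rightarrow> complex) \<Rightarrow> complex" where
  "vinner x y = (\<Sum>k\<in>UNIV. cnj (x k) * y k)"

definition mouter :: "('i \<Rightarrow> complex) \<Rightarrow> ('j \<Rightarrow> complex) \<Rightarrow> 'i \<Rightarrow> 'j \<Rightarrow> complex" where
  "mouter x y = (\<lambda>i j. x i * cnj (y j))"

definition mtrace :: "('i::finite \<Rightarrow> 'i \<Rightarrow> complex) \<Rightarrow> complex" where
  "mtrace A = (\<Sum>i\<in>UNIV. A i i)"

definition projection :: "('i::finite \<Rightarrow> 'i \<Rightarrow> complex) \<Rightarrow> bool" where
  "projection Q \<longleftrightarrow> mmul Q Q = Q \<and> madj Q = Q"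

definition partial_isometry :: "('i::finite \<Rightarrow> 'j::finite \<Rightarrow> complex) \<Rightarrow> bool" where
  "partial_isometry W \<longleftrightarrow> mmul (mmul W (madj W)) W = W"

lemma mmul_assoc: "mmul (mmul A B) C = mmul A (mmul B C)"
proof -
  have "(\<Sum>j\<in>UNIV. (\<Sum>l\<in>UNIV. A i l * B l j) * C j k) = (\<Sum>j\<in>UNIV. A i j * (\<Sum>l\<in>UNIV. B j l * C l k))"
    for i k
    by (simp add: sum_distrib_left sum_distrib_right mult.assoc) (rule sum.swap)
  then show ?thesis
    by (simp add: mmul_def fun_eq_iff)
qed

lemma madj_mmul: "madj (mmul A B) = mmul (madj B) (madj A)"
  by (simp add: madj_def mmul_def fun_eq_iff mult.commute)

lemma madj_madj [simp]: "madj (madj A) = A"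
  by (simp add: madj_def)

lemma madj_add [simp]: "madj (A + B) = madj A + madj B"
  by (simp add: madj_def fun_eq_iff)

lemma sum_mid_mult [simp]: "(\<Sum>j\<in>UNIV. mid (i::'i::finite) j * f j) = (f i :: complex)"
proof -
  have "(\<Sum>j\<in>UNIV. mid i j * f j) = (\<Sum>j\<in>UNIV. if i = j then f j else 0)"
    by (rule sum.cong) (auto simp: mid_def)
  then show ?thesis by simp
qed

lemma sum_mult_mid [simp]: "(\<Sum>j\<in>UNIV. f j * mid j (k::'i::finite)) = (f k :: complex)"
proof -
  have "(\<Sum>j\<in>UNIV. f j * mid j k) = (\<Sum>j\<in>UNIV. if j = k then f j else 0)"
    by (rule sum.cong) (auto simp: mid_def)
  then show ?thesis by simp
qed

lemma mmul_mid_left [simp]: "mmul mid A = A"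
  by (simp add: mmul_def)

lemma mmul_mid_right [simp]: "mmul A mid = A"
  by (simp add: mmul_def)

lemma mmul_add_left [simp]: "mmul (A + B) C = mmul A C + mmul B C"
  by (simp add: mmul_def fun_eq_iff distrib_right sum.distrib)

lemma mmul_add_right [simp]: "mmul A (B + C) = mmul A B + mmul A C"
  by (simp add: mmul_def fun_eq_iff distrib_left sum.distrib)

lemma mmul_mouter_right [simp]: "mmul A (mouter x y) = mouter (mvmul A x) y"
  by (simp add: mmul_def mouter_def mvmul_def fun_eq_iff sum_distrib_right mult.assoc)

lemma mmul_mouter_left [simp]: "mmul (mouter x y) A = mouter x (mvmul (madj A) y)"
  by (simp add: mmul_def mouter_def mvmul_def madj_def fun_eq_iff sum_distrib_left mult_ac)

lemma madj_mouter [simp]: "madj (mouter x y) = mouter y x"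
  by (simp add: madj_def mouter_def fun_eq_iff)

lemma mouter_zero [simp]: "mouter 0 y = 0" "mouter x 0 = 0"
  by (simp_all add: mouter_def fun_eq_iff)

lemma mvmul_mmul: "mvmul (mmul A B) x = mvmul A (mvmul B x)"
proof -
  have "(\<Sum>j\<in>UNIV. (\<Sum>l\<in>UNIV. A i l * B l j) * x j) = (\<Sum>j\<in>UNIV. A i j * (\<Sum>l\<in>UNIV. B j l * x l))"
    for i
    by (simp add: sum_distrib_left sum_distrib_right mult.assoc) (rule sum.swap)
  then show ?thesis
    by (simp add: mvmul_def mmul_def fun_eq_iff)
qed

lemma mvmul_add [simp]: "mvmul (A + B) x = mvmul A x + mvmul B x"
  by (simp add: mvmul_def fun_eq_iff distrib_right sum.distrib)

lemma mvmul_mouter [simp]: "mvmul (mouter x y) z = (\<lambda>i. x i * vinner y z)"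
  by (simp add: mvmul_def mouter_def vinner_def fun_eq_iff sum_distrib_left mult_ac)

lemma mvmul_zero [simp]: "mvmul A 0 = 0"
  by (simp add: mvmul_def fun_eq_iff)

lemma mtrace_add [simp]: "mtrace (A + B) = mtrace A + mtrace B"
  by (simp add: mtrace_def sum.distrib)

lemma mtrace_mouter [simp]: "mtrace (mouter y y) = vinner y y"
  by (simp add: mtrace_def mouter_def vinner_def mult.commute)

lemma mtrace_mmul_commute: "mtrace (mmul A B) = mtrace (mmul B A)"
  unfolding mtrace_def mmul_def by (subst sum.swap) (simp add: mult.commute)

lemma partial_isometry_madj:
  assumes "partial_isometry W"
  shows "partial_isometry (madj W)"
proof -
  have "madj W = madj (mmul (mmul W (madj W)) W)"
    using assms by (simp add: partial_isometry_def)
  then show ?thesis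
    by (simp add: partial_isometry_def madj_mmul mmul_assoc)
qed

lemma projection_madj_mmul:
  assumes "partial_isometry W"
  shows "projection (mmul (madj W) W)"
proof -
  have "mmul W (mmul (madj W) W) = W"
    using assms by (simp add: partial_isometry_def mmul_assoc)
  then show ?thesis
    by (simp add: projection_def mmul_assoc madj_mmul)
qed

lemma projection_mmul_madj:
  assumes "partial_isometry W"
  shows "projection (mmul W (madj W))"
  using projection_madj_mmul [OF partial_isometry_madj [OF assms]] by simp

lemma projection_diag:
  assumes "projection Q"
  shows "Q i i = of_real (\<Sum>j\<in>UNIV. (cmod (Q i j))\<^sup>2)"
proof -
  have adj: "Q j i = cnj (Q i j)" for j
  proof -
    have "madj Q j i = Q j i"
      using assms by (simp add: projection_def)
    then show ?thesis
      by (simp add: madj_def)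
  qed
  have "Q i i = mmul Q Q i i"
    using assms by (simp add: projection_def)
  also have "\<dots> = (\<Sum>j\<in>UNIV. Q i j * cnj (Q i j))"
    by (simp add: mmul_def adj)
  finally show ?thesis
    by (simp only: of_real_sum complex_norm_square)
qed

lemma projection_diag_bounds:
  assumes "projection Q"
  shows "0 \<le> Re (Q i i)" "Re (Q i i) \<le> 1"
proof -
  define s where "s = (\<Sum>j\<in>UNIV. (cmod (Q i j))\<^sup>2)"
  have Qii: "Q i i = of_real s"
    unfolding s_def by (rule projection_diag [OF assms])
  have "0 \<le> s"
    by (simp add: s_def sum_nonneg)
  then show "0 \<le> Re (Q i i)"
    by (simp add: Qii)
  have "(cmod (Q i i))\<^sup>2 \<le> s"
    unfolding s_def by (rule member_le_sum) auto
  then have "s * s \<le> s * 1"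
    by (simp add: Qii power2_eq_square)
  with \<open>0 \<le> s\<close> have "s \<le> 1"
    by (cases "s = 0") (simp_all add: mult_le_cancel_left_pos)
  then show "Re (Q i i) \<le> 1"
    by (simp add: Qii)
qed

lemma projection_eq_mid_if_trace:
  fixes Q :: "'i::finite \<Rightarrow> 'i \<Rightarrow> complex"
  assumes Q: "projection Q" and trace: "real CARD('i) \<le> Re (mtrace Q)"
  shows "Q = mid"
proof -
  have diag: "Re (Q i i) = 1" for i
  proof (rule sum_mono_inv [where f = "\<lambda>i. Re (Q i i)" and g = "\<lambda>_. 1" and I = UNIV])
    have "(\<Sum>i\<in>UNIV. Re (Q i i)) \<le> (\<Sum>i\<in>(UNIV :: 'i set). 1)"
      by (intro sum_mono projection_diag_bounds [OF Q])
    then show "(\<Sum>i\<in>UNIV. Re (Q i i)) = (\<Sum>i\<in>(UNIV :: 'i set). 1)"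
      using trace by (simp add: mtrace_def Re_sum)
  qed (simp_all add: projection_diag_bounds [OF Q])
  have row: "(\<Sum>j\<in>UNIV. (cmod (Q i j))\<^sup>2) = 1" for i
    using diag [of i] by (simp only: projection_diag [OF Q, of i] Re_complex_of_real)
  have Qii: "Q i i = 1" for i
    by (simp only: projection_diag [OF Q, of i] row of_real_1)
  have off_diag: "Q i j = 0" if "j \<noteq> i" for i j
  proof -
    have rest: "(\<Sum>j\<in>UNIV - {i}. (cmod (Q i j))\<^sup>2) = 0"
      using row [of i] by (simp add: sum.remove [of UNIV i] Qii)
    have "(cmod (Q i j))\<^sup>2 = 0"
      by (rule sum_nonneg_0 [OF _ _ rest]) (use that in auto)
    then show ?thesis
      by simp
  qed
  show ?thesis
    using Qii off_diag by (simp add: fun_eq_iff mid_def)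
qed

lemma partial_isometry_unitary:
  fixes W :: "'x::finite \<Rightarrow> 'y::finite \<Rightarrow> complex"
  assumes W: "partial_isometry W" and card: "CARD('x) = CARD('y)"
    and Q: "mmul (madj W) W = mid"
  shows "unitary W"
proof -
  have "mtrace (mmul W (madj W)) = mtrace (mmul (madj W) W)"
    by (rule mtrace_mmul_commute)
  also have "\<dots> = of_nat CARD('x)"
    by (simp add: Q card mtrace_def mid_def)
  finally have "mmul W (madj W) = mid"
    by (intro projection_eq_mid_if_trace projection_mmul_madj W) simp
  then show ?thesis
    using Q by (simp add: unitary_def)
qed

lemma vinner_self: "vinner z z = of_real (\<Sum>k\<in>UNIV. (cmod (z k))\<^sup>2)"
  unfolding vinner_def of_real_sum by (simp only: complex_norm_square mult.commute)

lemma unit_vector_in_kernel: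
  assumes "mvmul A z = 0" and "z \<noteq> 0"
  shows "\<exists>y. mvmul A y = 0 \<and> vinner y y = 1"
proof -
  define s where "s = (\<Sum>k\<in>UNIV. (cmod (z k))\<^sup>2)"
  obtain k where "z k \<noteq> 0"
    using assms(2) by (auto simp: fun_eq_iff)
  then have "0 < (cmod (z k))\<^sup>2"
    by simp
  also have "\<dots> \<le> s"
    unfolding s_def by (rule member_le_sum) auto
  finally have "0 < s" .
  define y where "y = (\<lambda>k. z k / of_real (sqrt s))"
  have "mvmul A y = (\<lambda>i. mvmul A z i / of_real (sqrt s))"
    by (simp add: y_def mvmul_def sum_divide_distrib)
  then have "mvmul A y = 0"
    using assms(1) by (simp add: zero_fun_def)
  have "vinner y y = vinner z z / of_real s"
    using \<open>0 < s\<close> by (simp add: y_def vinner_def sum_divide_distrib power2_eq_square flip: of_real_mult)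
  moreover have "vinner z z = of_real s"
    by (simp only: vinner_self s_def)
  ultimately have "vinner y y = 1"
    using \<open>0 < s\<close> by simp
  with \<open>mvmul A y = 0\<close> show ?thesis
    by blast
qed

lemma partial_isometry_kernel:
  assumes W: "partial_isometry W" and Q: "mmul (madj W) W \<noteq> mid"
  shows "\<exists>y. mvmul W y = 0 \<and> vinner y y = 1"
proof -
  obtain i j where ij: "mmul (madj W) W i j \<noteq> mid i j"
    using Q by (auto simp: fun_eq_iff)
  define z where "z = (\<lambda>k. mid k j - mmul (madj W) W k j)"
  have "mvmul W z = (\<lambda>i. W i j - mmul (mmul W (madj W)) W i j)"
    by (simp add: z_def mvmul_def mmul_assoc right_diff_distrib sum_subtractf)
       (simp add: mmul_def)
  then have "mvmul W z = 0"
    using W by (simp add: partial_isometry_def zero_fun_def)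
  moreover have "z \<noteq> 0"
  proof
    assume "z = 0"
    then have "z i = 0"
      by simp
    with ij show False
      by (simp add: z_def)
  qed
  ultimately show ?thesis
    by (rule unit_vector_in_kernel)
qed

lemma partial_isometry_cokernel:
  fixes W :: "'x::finite \<Rightarrow> 'y::finite \<Rightarrow> complex"
  assumes W: "partial_isometry W" and card: "CARD('x) = CARD('y)"
    and Q: "mmul (madj W) W \<noteq> mid"
  shows "\<exists>x. mvmul (madj W) x = 0 \<and> vinner x x = 1"
proof (rule partial_isometry_kernel)
  show "partial_isometry (madj W)"
    using W by (rule partial_isometry_madj)
  show "mmul (madj (madj W)) (madj W) \<noteq> mid"
  proof
    assume "mmul (madj (madj W)) (madj W) = mid"
    then have "unitary (madj W)"
      using partial_isometry_unitary [OF partial_isometry_madj [OF W]] card by simp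
    with Q show False
      by (simp add: unitary_def)
  qed
qed

definition unitary_extension ::
    "('x::finite \<Rightarrow> 'y::finite \<Rightarrow> complex) \<Rightarrow> ('x \<Rightarrow> 'y \<Rightarrow> complex) \<Rightarrow> bool" where
  "unitary_extension U W \<longleftrightarrow>
     unitary U \<and> W = mmul (mmul W (madj W)) U \<and> W = mmul U (mmul (madj W) W)"

lemma gram_add_mouter:
  assumes y: "mvmul W y = 0" "vinner y y = 1" and x: "mvmul (madj W) x = 0" "vinner x x = 1"
  shows "mmul (W + mouter x y) (madj (W + mouter x y)) = mmul W (madj W) + mouter x x"
    and "mmul (madj (W + mouter x y)) (W + mouter x y) = mmul (madj W) W + mouter y y"
  using x y by (simp_all add: madj_mmul [symmetric])

lemma partial_isometry_add_mouter:
  assumes W: "partial_isometry W"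
    and y: "mvmul W y = 0" "vinner y y = 1" and x: "mvmul (madj W) x = 0" "vinner x x = 1"
  shows "partial_isometry (W + mouter x y)"
  using W x y by (simp add: partial_isometry_def gram_add_mouter [OF y x] mvmul_mmul)

lemma unitary_extension_remove_mouter:
  assumes y: "mvmul W y = 0" "vinner y y = 1" and x: "mvmul (madj W) x = 0" "vinner x x = 1"
    and U: "unitary_extension U (W + mouter x y)"
  shows "unitary_extension U W"
proof -
  let ?P = "mmul W (madj W)" and ?Q = "mmul (madj W) W"
  have PU: "W + mouter x y = mmul (?P + mouter x x) U" and UQ: "W + mouter x y = mmul U (?Q + mouter y y)"
    using U unfolding unitary_extension_def gram_add_mouter [OF y x] by blast+
  have "x = mvmul (W + mouter x y) y"
    using y by simp
  also have "\<dots> = mvmul U y"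
    using y by (subst UQ) (simp add: mvmul_mmul)
  finally have Uy: "mvmul U y = x" ..
  have "y = mvmul (madj (W + mouter x y)) x"
    using x by simp
  also have "\<dots> = mvmul (madj U) x"
    using x by (subst PU) (simp add: madj_mmul mvmul_mmul)
  finally have Ux: "mvmul (madj U) x = y" ..
  have "W + mouter x y = mmul ?P U + mouter x y" and "W + mouter x y = mmul U ?Q + mouter x y"
    by (subst PU, simp add: Ux) (subst UQ, simp add: Uy)
  then show ?thesis
    using U by (simp add: unitary_extension_def)
qed

lemma partial_isometry_unitary_extension:
  fixes W :: "'x::finite \<Rightarrow> 'y::finite \<Rightarrow> complex"
  assumes W: "partial_isometry W" and card: "CARD('x) = CARD('y)"
  shows "\<exists>U. unitary_extension U W"
proof -
  have self: "unitary_extension W W" if "partial_isometry W" "mmul (madj W) W = mid"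
    for W :: "'x \<Rightarrow> 'y \<Rightarrow> complex"
    using partial_isometry_unitary [OF that(1) card that(2)]
    by (simp add: unitary_extension_def unitary_def)
  have extend: "\<exists>U. unitary_extension U W"
    if "partial_isometry W" "real CARD('y) \<le> Re (mtrace (mmul (madj W) W)) + real n"
    for W :: "'x \<Rightarrow> 'y \<Rightarrow> complex" and n
    using that
  proof (induction n arbitrary: W)
    case 0
    then have "mmul (madj W) W = mid"
      by (intro projection_eq_mid_if_trace projection_madj_mmul) simp_all
    with 0 show ?case
      using self by blast
  next
    case (Suc n)
    show ?case
    proof (cases "mmul (madj W) W = mid")
      case True
      with Suc.prems show ?thesis
        using self by blast
    next
      case False
      obtain y where y: "mvmul W y = 0" "vinner y y = 1"
        using partial_isometry_kernel [OF Suc.prems(1) False] by blast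
      obtain x where x: "mvmul (madj W) x = 0" "vinner x x = 1"
        using partial_isometry_cokernel [OF Suc.prems(1) card False] by blast
      have "real CARD('y) \<le> Re (mtrace (mmul (madj (W + mouter x y)) (W + mouter x y))) + real n"
        using Suc.prems(2) y unfolding gram_add_mouter [OF y x] by simp
      then obtain U where "unitary_extension U (W + mouter x y)"
        using Suc.IH partial_isometry_add_mouter [OF Suc.prems(1) y x] by blast
      then show ?thesis
        using unitary_extension_remove_mouter [OF y x] by blast
    qed
  qed
  have "0 \<le> Re (mtrace (mmul (madj W) W))"
    by (simp add: mtrace_def Re_sum sum_nonneg projection_diag_bounds [OF projection_madj_mmul [OF W]])
  then show ?thesis
    by (intro extend [OF W, of "CARD('y)"]) simp
qed

section \<open>Corepresentations of weak Hopf algebras\<close>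

lemma sum_bvec_mult [simp]: "(\<Sum>p\<in>UNIV. bvec q p * f p) = (f (q::'a::finite) :: complex)"
  by (simp add: bvec_def if_distrib [of "\<lambda>c. c * _"] cong: if_cong)

lemma sum_bvec_at_mult [simp]: "(\<Sum>p\<in>UNIV. bvec p k * f p) = (f (k::'a::finite) :: complex)"
  by (simp add: bvec_def if_distrib [of "\<lambda>c. c * _"] cong: if_cong)

lemma sum_mult_sum_swap:
  "(\<Sum>l\<in>L. (\<Sum>a\<in>A. F a l) * g l) = (\<Sum>a\<in>A. \<Sum>l\<in>L. F a l * (g l :: complex))"
  by (simp add: sum_distrib_right) (rule sum.swap)

lemma cou_amul_bvec: "cou H (amul H (bvec p) (bvec q)) = (\<Sum>l\<in>UNIV. wh_mc H p q l * wh_ep H l)"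
  by (simp add: cou_def amul_def mult.assoc flip: sum_distrib_left)

lemma amul_bvec_left: "amul H (bvec p) y m = (\<Sum>q\<in>UNIV. y q * wh_mc H p q m)"
  by (simp add: amul_def mult.assoc flip: sum_distrib_left)

lemma eps_s_bvec: "eps_s H x k = (\<Sum>q\<in>UNIV. cop H (wh_un H) (k, q) * cou H (amul H x (bvec q)))"
  by (simp add: eps_s_def tapp2_def mult.commute mult.left_commute flip: sum_distrib_left)

lemma counit_right_tmul2_unit:
  "(\<Sum>l\<in>UNIV. tmul2 H X (cop H (wh_un H)) (m, l) * wh_ep H l) = tapp2 X (\<lambda>a b. amul H a (eps_s H b)) m"
proof -
  let ?D = "cop H (wh_un H)"
  have "(\<Sum>l\<in>UNIV. tmul2 H X ?D (m, l) * wh_ep H l) =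
      (\<Sum>i\<in>UNIV. \<Sum>j\<in>UNIV. X (i, j) * (\<Sum>i'\<in>UNIV. \<Sum>j'\<in>UNIV.
         ?D (i', j') * (wh_mc H i i' m * cou H (amul H (bvec j) (bvec j')))))"
    unfolding tmul2_def prod.case cou_amul_bvec
    by (simp only: sum_mult_sum_swap mult.assoc flip: sum_distrib_left)
  also have "\<dots> = tapp2 X (\<lambda>a b. amul H a (eps_s H b)) m"
    by (simp add: tapp2_def amul_bvec_left eps_s_bvec sum_distrib_left sum_distrib_right mult_ac)
  finally show ?thesis .
qed

lemma tapp2_cop_mul_eps_s:
  assumes "weak_bialgebra H"
  shows "tapp2 (cop H x) (\<lambda>a b. amul H a (eps_s H b)) = x"
proof -
  have unit: "amul H x (wh_un H) = x"
    and counit: "(\<lambda>i. \<Sum>j\<in>UNIV. cop H x (i, j) * wh_ep H j) = x"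
    and mult: "cop H (amul H x (wh_un H)) = tmul2 H (cop H x) (cop H (wh_un H))"
    for x
    using assms unfolding weak_bialgebra_def by blast+
  have "x = (\<lambda>m. \<Sum>l\<in>UNIV. cop H (amul H x (wh_un H)) (m, l) * wh_ep H l)"
    by (simp only: counit unit)
  also have "\<dots> = tapp2 (cop H x) (\<lambda>a b. amul H a (eps_s H b))"
    by (simp only: mult counit_right_tmul2_unit)
  finally show ?thesis ..
qed

(* tapp2 evaluates its map on basis vectors only, so it computes the Sweedler sum of a map only
   if that map is (bi)linear in coordinates. *)
definition coord_linear :: "(('a::finite \<Rightarrow> complex) \<Rightarrow> 'c \<Rightarrow> complex) \<Rightarrow> bool" where
  "coord_linear g \<longleftrightarrow> (\<forall>x. g x = (\<lambda>m. \<Sum>p\<in>UNIV. x p * g (bvec p) m))"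

definition coord_bilinear ::
    "(('a::finite \<Rightarrow> complex) \<Rightarrow> ('b::finite \<Rightarrow> complex) \<Rightarrow> 'c \<Rightarrow> complex) \<Rightarrow> bool" where
  "coord_bilinear f \<longleftrightarrow>
     (\<forall>x y. f x y = (\<lambda>m. \<Sum>p\<in>UNIV. \<Sum>q\<in>UNIV. x p * y q * f (bvec p) (bvec q) m))"

lemma coord_bilinear_amul: "coord_bilinear (amul H)"
  by (simp add: coord_bilinear_def amul_bvec_left) (simp add: amul_def)

lemma coord_linear_ant: "coord_linear (ant H)"
  by (simp add: coord_linear_def ant_def)

lemma cou_amul_linear_left: "cou H (amul H x y) = (\<Sum>p\<in>UNIV. x p * cou H (amul H (bvec p) y))"
  by (simp only: cou_def amul_def sum_bvec_mult sum_mult_sum_swap mult.assoc flip: sum_distrib_left)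

lemma coord_linear_eps_s: "coord_linear (eps_s H)"
  unfolding coord_linear_def
proof (intro allI ext)
  fix x m
  have "eps_s H x m =
      (\<Sum>q\<in>UNIV. \<Sum>p\<in>UNIV. x p * (cop H (wh_un H) (m, q) * cou H (amul H (bvec p) (bvec q))))"
    by (simp add: eps_s_bvec cou_amul_linear_left [of H x] sum_distrib_left mult_ac)
  also have "\<dots> = (\<Sum>p\<in>UNIV. x p * eps_s H (bvec p) m)"
    by (subst sum.swap) (simp add: eps_s_bvec sum_distrib_left)
  finally show "eps_s H x m = (\<Sum>p\<in>UNIV. x p * eps_s H (bvec p) m)" .
qed

lemma coord_bilinearD:
  "coord_bilinear f \<Longrightarrow> f x y m = (\<Sum>p\<in>UNIV. \<Sum>q\<in>UNIV. x p * y q * f (bvec p) (bvec q) m)"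
  unfolding coord_bilinear_def by meson

lemma coord_linearD: "coord_linear g \<Longrightarrow> g x m = (\<Sum>p\<in>UNIV. x p * g (bvec p) m)"
  unfolding coord_linear_def by meson

lemma coord_bilinear_swap:
  assumes "coord_bilinear f"
  shows "coord_bilinear (\<lambda>b a. f a b)"
  unfolding coord_bilinear_def
  by (intro allI ext, subst coord_bilinearD [OF assms], subst sum.swap) (simp add: mult_ac)

lemma coord_bilinear_compose_right:
  assumes f: "coord_bilinear f" and g: "coord_linear g"
  shows "coord_bilinear (\<lambda>a b. f a (g b))"
  unfolding coord_bilinear_def
proof (intro allI ext)
  fix x y m
  have fe: "f (bvec p) (g (bvec r)) m = (\<Sum>q\<in>UNIV. g (bvec r) q * f (bvec p) (bvec q) m)" for p r
    by (subst coord_bilinearD [OF f]) (simp add: mult.assoc flip: sum_distrib_left)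
  have "f x (g y) m = (\<Sum>p\<in>UNIV. \<Sum>q\<in>UNIV. x p * g y q * f (bvec p) (bvec q) m)"
    by (rule coord_bilinearD [OF f])
  also have "\<dots> = (\<Sum>p\<in>UNIV. \<Sum>q\<in>UNIV. \<Sum>r\<in>UNIV. x p * y r * (g (bvec r) q * f (bvec p) (bvec q) m))"
    by (simp add: coord_linearD [OF g, of y] sum_distrib_left sum_distrib_right mult_ac)
  also have "\<dots> = (\<Sum>p\<in>UNIV. \<Sum>r\<in>UNIV. x p * y r * f (bvec p) (g (bvec r)) m)"
    by (rule sum.cong [OF refl], subst sum.swap) (simp add: fe sum_distrib_left)
  finally show "f x (g y) m = (\<Sum>p\<in>UNIV. \<Sum>r\<in>UNIV. x p * y r * f (bvec p) (g (bvec r)) m)" .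
qed

lemma coord_bilinear_compose_left:
  assumes "coord_bilinear f" and "coord_linear g"
  shows "coord_bilinear (\<lambda>a b. f (g a) b)"
  using coord_bilinear_swap [OF coord_bilinear_compose_right [OF coord_bilinear_swap [OF assms(1)] assms(2)]] .

lemma tapp2_cop_corep:
  assumes v: "corep H v" and f: "coord_bilinear f"
  shows "tapp2 (cop H (v i j)) f = (\<lambda>m. \<Sum>k\<in>UNIV. f (v i k) (v k j) m)"
proof
  fix m
  have "tapp2 (cop H (v i j)) f m =
      (\<Sum>p\<in>UNIV. \<Sum>q\<in>UNIV. (\<Sum>k\<in>UNIV. v i k p * v k j q) * f (bvec p) (bvec q) m)"
    using v by (simp add: tapp2_def corep_def)
  also have "\<dots> = (\<Sum>k\<in>UNIV. \<Sum>p\<in>UNIV. \<Sum>q\<in>UNIV. v i k p * v k j q * f (bvec p) (bvec q) m)"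
    by (simp only: sum_mult_sum_swap) (rule sum.swap)
  also have "\<dots> = (\<Sum>k\<in>UNIV. f (v i k) (v k j) m)"
    by (simp only: coord_bilinearD [OF f, of "v i k" "v k j" m for k])
  finally show "tapp2 (cop H (v i j)) f m = (\<Sum>k\<in>UNIV. f (v i k) (v k j) m)" .
qed

lemma corep_sum_mul_ant:
  assumes H: "weak_hopf H" and v: "corep H v"
  shows "(\<lambda>m. \<Sum>k\<in>UNIV. amul H (v i k) (ant H (v k j)) m) = eps_t H (v i j)"
proof -
  have "tapp2 (cop H (v i j)) (\<lambda>a b. amul H a (ant H b)) = eps_t H (v i j)"
    using H unfolding weak_hopf_def by blast
  then show ?thesis
    by (simp add: tapp2_cop_corep [OF v]
        coord_bilinear_compose_right [OF coord_bilinear_amul coord_linear_ant])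
qed

lemma corep_sum_ant_mul:
  assumes H: "weak_hopf H" and v: "corep H v"
  shows "(\<lambda>m. \<Sum>k\<in>UNIV. amul H (ant H (v i k)) (v k j) m) = eps_s H (v i j)"
proof -
  have "tapp2 (cop H (v i j)) (\<lambda>a b. amul H (ant H a) b) = eps_s H (v i j)"
    using H unfolding weak_hopf_def by blast
  then show ?thesis
    by (simp add: tapp2_cop_corep [OF v]
        coord_bilinear_compose_left [OF coord_bilinear_amul coord_linear_ant])
qed

lemma corep_sum_mul_eps_s:
  assumes H: "weak_bialgebra H" and v: "corep H v"
  shows "(\<lambda>m. \<Sum>k\<in>UNIV. amul H (v i k) (eps_s H (v k j)) m) = v i j"
  using tapp2_cop_mul_eps_s [OF H, of "v i j"]
  by (simp add: tapp2_cop_corep [OF v]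
      coord_bilinear_compose_right [OF coord_bilinear_amul coord_linear_eps_s])

lemma rep_sum: "rep R (\<lambda>m. \<Sum>k\<in>K. f k m) a b = (\<Sum>k\<in>K. rep R (f k) a b)"
  unfolding rep_def by (simp add: sum_distrib_right) (rule sum.swap)

lemma rep_sum_mul:
  assumes "star_rep_on H UNIV R"
  shows "(\<Sum>k\<in>K. \<Sum>c\<in>UNIV. rep R (x k) a c * rep R (y k) c b) =
    rep R (\<lambda>m. \<Sum>k\<in>K. amul H (x k) (y k) m) a b"
  using assms by (simp add: rep_sum star_rep_on_def)

lemma rep_eps_t:
  "rep R (eps_t H x) a b =
    (\<Sum>p\<in>UNIV. \<Sum>q\<in>UNIV. cop H (wh_un H) (p, q) * cou H (amul H (bvec p) x) * rep R (bvec q) a b)"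
  by (simp add: eps_t_def tapp2_def rep_def sum_distrib_left sum_distrib_right mult_ac,
      subst sum.swap, simp add: mult_ac)

lemma rep_eps_s:
  "rep R (eps_s H x) a b =
    (\<Sum>p\<in>UNIV. \<Sum>q\<in>UNIV. cop H (wh_un H) (p, q) * rep R (bvec p) a b * cou H (amul H x (bvec q)))"
  by (simp add: eps_s_bvec rep_def sum_distrib_left sum_distrib_right mult_ac)

definition corep_operator ::
    "('b::finite \<Rightarrow> 'r \<Rightarrow> 'r \<Rightarrow> complex) \<Rightarrow> ('v \<Rightarrow> 'v \<Rightarrow> 'b \<Rightarrow> complex) \<Rightarrow>
      'v \<times> 'r \<Rightarrow> 'r \<times> 'v \<Rightarrow> complex" where
  "corep_operator R v = (\<lambda>(i, a) (b, j). rep R (v i j) a b)"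

lemma sum_UNIV_prod: "(\<Sum>z\<in>UNIV. f z) = (\<Sum>x\<in>UNIV. \<Sum>y\<in>UNIV. f (x, y))"
  by (simp add: sum.cartesian_product flip: UNIV_Times_UNIV)

lemma rep_astar:
  "star_rep_on H UNIV R \<Longrightarrow> rep R (astar H x) a c = cnj (rep R x c a)"
  by (simp add: star_rep_on_def)

lemma corep_operator_mmul_madj:
  assumes H: "weak_hopf H" and R: "star_rep_on H UNIV R" and v: "corep H v"
    and S: "\<And>i j. ant H (v i j) = astar H (v j i)"
  shows "mmul (corep_operator R v) (madj (corep_operator R v)) =
    (\<lambda>(i, a) (j, b). rep R (eps_t H (v i j)) a b)"
proof (intro ext, clarify)
  fix i a j b
  have "mmul (corep_operator R v) (madj (corep_operator R v)) (i, a) (j, b) =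
      (\<Sum>c\<in>UNIV. \<Sum>k\<in>UNIV. rep R (v i k) a c * rep R (ant H (v k j)) c b)"
    by (simp add: mmul_def madj_def corep_operator_def sum_UNIV_prod S rep_astar [OF R])
  also have "\<dots> = rep R (eps_t H (v i j)) a b"
    by (subst sum.swap) (simp add: rep_sum_mul [OF R] corep_sum_mul_ant [OF H v])
  finally show "mmul (corep_operator R v) (madj (corep_operator R v)) (i, a) (j, b) =
      rep R (eps_t H (v i j)) a b" .
qed

lemma corep_operator_madj_mmul:
  assumes H: "weak_hopf H" and R: "star_rep_on H UNIV R" and v: "corep H v"
    and S: "\<And>i j. ant H (v i j) = astar H (v j i)"
  shows "mmul (madj (corep_operator R v)) (corep_operator R v) =
    (\<lambda>(a, i) (b, j). rep R (eps_s H (v i j)) a b)"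
proof (intro ext, clarify)
  fix i a j b
  have "mmul (madj (corep_operator R v)) (corep_operator R v) (a, i) (b, j) =
      (\<Sum>k\<in>UNIV. \<Sum>c\<in>UNIV. rep R (ant H (v i k)) a c * rep R (v k j) c b)"
    by (simp add: mmul_def madj_def corep_operator_def sum_UNIV_prod S rep_astar [OF R])
  also have "\<dots> = rep R (eps_s H (v i j)) a b"
    by (simp add: rep_sum_mul [OF R] corep_sum_ant_mul [OF H v])
  finally show "mmul (madj (corep_operator R v)) (corep_operator R v) (a, i) (b, j) =
      rep R (eps_s H (v i j)) a b" .
qed

lemma corep_operator_mmul_eps_s:
  assumes H: "weak_bialgebra H" and R: "star_rep_on H UNIV R" and v: "corep H v"
  shows "mmul (corep_operator R v) (\<lambda>(a, i) (b, j). rep R (eps_s H (v i j)) a b) = corep_operator R v"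
proof (intro ext, clarify)
  fix i a b j
  have "mmul (corep_operator R v) (\<lambda>(a, i) (b, j). rep R (eps_s H (v i j)) a b) (i, a) (b, j) =
      (\<Sum>c\<in>UNIV. \<Sum>k\<in>UNIV. rep R (v i k) a c * rep R (eps_s H (v k j)) c b)"
    by (simp add: mmul_def corep_operator_def sum_UNIV_prod)
  also have "\<dots> = corep_operator R v (i, a) (b, j)"
    by (subst sum.swap) (simp add: rep_sum_mul [OF R] corep_sum_mul_eps_s [OF H v] corep_operator_def)
  finally show "mmul (corep_operator R v) (\<lambda>(a, i) (b, j). rep R (eps_s H (v i j)) a b) (i, a) (b, j) =
      corep_operator R v (i, a) (b, j)" .
qed

theorem mainTheorem6:
  fixes H :: "('b::finite) wha"
    and R :: "'b \<Rightarrow> 'r::finite \<Rightarrow> 'r \<Rightarrow> complex"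
    and v :: "'v::finite \<Rightarrow> 'v \<Rightarrow> 'b \<Rightarrow> complex"
    and W :: "'v \<times> 'r \<Rightarrow> 'r \<times> 'v \<Rightarrow> complex"
    and P :: "'v \<times> 'r \<Rightarrow> 'v \<times> 'r \<Rightarrow> complex"
    and Q :: "'r \<times> 'v \<Rightarrow> 'r \<times> 'v \<Rightarrow> complex"
  assumes "C_star_weak_hopf H"
    and "star_rep_on H UNIV R"
    and "corep H v"
    and "\<forall>i j. ant H (v i j) = astar H (v j i)"
    and "\<forall>i a b j. W (i, a) (b, j) = rep R (v i j) a b"
    and "\<forall>i a j b. P (i, a) (j, b) =
           (\<Sum>p\<in>UNIV. \<Sum>q\<in>UNIV. cop H (wh_un H) (p, q) * cou H (amul H (bvec p) (v i j)) * rep R (bvec q) a b)"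
    and "\<forall>a i b j. Q (a, i) (b, j) =
           (\<Sum>p\<in>UNIV. \<Sum>q\<in>UNIV. cop H (wh_un H) (p, q) * rep R (bvec p) a b * cou H (amul H (v i j) (bvec q)))"
  shows "mmul P P = P \<and> madj P = P \<and> mmul Q Q = Q \<and> madj Q = Q \<and>
         mmul W (madj W) = P \<and> mmul (madj W) W = Q \<and>
         (\<exists>U :: 'v \<times> 'r \<Rightarrow> 'r \<times> 'v \<Rightarrow> complex. unitary U \<and> W = mmul P U \<and> W = mmul U Q)"
proof -
  have H: "weak_hopf H"
    using assms(1) by (simp add: C_star_weak_hopf_def star_weak_hopf_def)
  then have wb: "weak_bialgebra H"
    by (simp add: weak_hopf_def)
  have S: "ant H (v i j) = astar H (v j i)" for i j
    using assms(4) by blast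
  have W: "W = corep_operator R v"
    using assms(5) by (simp add: fun_eq_iff corep_operator_def)
  have P: "P = mmul W (madj W)"
    using assms(6) by (simp add: W corep_operator_mmul_madj [OF H assms(2,3) S] fun_eq_iff rep_eps_t)
  have Q: "Q = mmul (madj W) W"
    using assms(7) by (simp add: W corep_operator_madj_mmul [OF H assms(2,3) S] fun_eq_iff rep_eps_s)
  have W_pi: "partial_isometry W"
    unfolding partial_isometry_def mmul_assoc W corep_operator_madj_mmul [OF H assms(2,3) S]
    by (rule corep_operator_mmul_eps_s [OF wb assms(2,3)])
  have "CARD('v \<times> 'r) = CARD('r \<times> 'v)"
    by simp
  then obtain U where "unitary_extension U W"
    using partial_isometry_unitary_extension [OF W_pi] by blast
  then show ?thesis
    using projection_mmul_madj [OF W_pi] projection_madj_mmul [OF W_pi] W_pi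
    unfolding projection_def unitary_extension_def P Q by blast
qed

end
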